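(* Let $f(x)=\frac1n\sum_{i=1}^nf_i(x)$ on $\mathbb{R}^d$ where each $f_i$ is $\mu_i$-strongly convex and $L_i$-smooth, and let $x^*$ be the minimizer of $f$. Consider SGD with stepsize $\gamma_k:=\frac1{\sqrt{k+1}}\min\left\{\frac{f_{\mathcal S_k}(x^k)-\ell^*_{\mathcal S_k}}{\|\nabla f_{\mathcal S_k}(x^k)\|^2},\ \gamma_{k-1}\sqrt k\right\}$ for $k\ge1$, and $\gamma_0:=\min\left\{\frac{f_{\mathcal S_0}(x^0)-\ell^*_{\mathcal S_0}}{\|\nabla f_{\mathcal S_0}(x^0)\|^2},\ \gamma_b\right\}$. Then for every $K\ge1$, $$\mathbb{E}[f(\bar x^K)-f(x^* )]\le\frac{2\tilde LD^2_{\max}+2\hat\sigma_B^2}{\sqrt K},$$ where $\bar x^K=\frac1K\sum_{k=0}^{K-1}x^k$, $\tilde L:=\max\{\max_iL_i,\frac1{2\gamma_b}\}$, and $$D^2_{\max}:=\max\left\{\|x^0-x^*\|^2,\ \frac{2\gamma_b\hat\sigma^2_{B,\max}}{\min\left\{\frac{\mu_{\min}}{2L_{\max}},\mu_{\min}\gamma_b\right\}}\right\}$$ with $\mu_{\min}=\min_i\mu_i$, $L_{\max}=\max_iL_i$.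
   Context: Minibatches: fix a batch size $B$; at each iteration a subset $\mathcal S_k\subseteq[n]$ with $|\mathcal S_k|=B$ is sampled uniformly at random, independently across iterations. For $\mathcal S\subseteq[n]$, $f_{\mathcal S}:=\frac1{|\mathcal S|}\sum_{i\in\mathcal S}f_i$, $f^*_{\mathcal S}:=\inf_xf_{\mathcal S}(x)$, and $\ell^*_{\mathcal S}$ is a given real number with $\ell^*_{\mathcal S}\le f^*_{\mathcal S}$. SGD: $x^{k+1}=x^k-\gamma_k\nabla f_{\mathcal S_k}(x^k)$ from given $x^0$; $\gamma_b>0$ is a fixed constant; if $\nabla f_{\mathcal S_k}(x^k)=0$ the iterate is not updated. $\hat\sigma_B^2:=\mathbb{E}_{\mathcal S}[f_{\mathcal S}(x^* )-\ell^*_{\mathcal S}]$ with $\mathcal S$ uniform over subsets of size $B$; $\hat\sigma^2_{B,\max}:=\max_{|\mathcal S|=B}[f_{\mathcal S}(x^* )-\ell^*_{\mathcal S}]$. *)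

theory Defs
  imports "HOL-Analysis.Analysis"
begin

definition strongly_convex :: "('a::real_normed_vector \<Rightarrow> real) \<Rightarrow> real \<Rightarrow> bool" where
  "strongly_convex f \<mu> \<longleftrightarrow>
     (\<forall>x y t. 0 \<le> t \<and> t \<le> 1 \<longrightarrow>
        f (t *\<^sub>R x + (1 - t) *\<^sub>R y)
          \<le> t * f x + (1 - t) * f y - \<mu> / 2 * t * (1 - t) * (norm (x - y))\<^sup>2)"

definition L_smooth :: "('a::real_inner \<Rightarrow> real) \<Rightarrow> real \<Rightarrow> bool" where
  "L_smooth f L \<longleftrightarrow>
     (\<exists>g. (\<forall>x. GDERIV f x :> g x) \<and> (\<forall>x y. norm (g x - g y) \<le> L * norm (x - y)))"

definition grad :: "('a::real_inner \<Rightarrow> real) \<Rightarrow> 'a \<Rightarrow> 'a" where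
  "grad f x = (SOME D. GDERIV f x :> D)"

definition fS :: "(nat \<Rightarrow> 'a \<Rightarrow> real) \<Rightarrow> nat set \<Rightarrow> 'a \<Rightarrow> real" where
  "fS fs S x = (\<Sum>i\<in>S. fs i x) / real (card S)"

definition batches :: "nat \<Rightarrow> nat \<Rightarrow> nat set set" where
  "batches n B = {S. S \<subseteq> {..<n} \<and> card S = B}"

text \<open>min{ (f_S(x) - l*_S) / ||grad f_S(x)||^2 , c }; when the gradient vanishes the
  Polyak ratio is read as +infinity, so the min is c\<close>
definition polyak_cap ::
  "(nat \<Rightarrow> 'a::real_inner \<Rightarrow> real) \<Rightarrow> (nat set \<Rightarrow> real) \<Rightarrow> nat set \<Rightarrow> 'a \<Rightarrow> real \<Rightarrow> real" where
  "polyak_cap fs ls S x c =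
     (if grad (fS fs S) x = 0 then c
      else min ((fS fs S x - ls S) / (norm (grad (fS fs S) x))\<^sup>2) c)"

definition sgd_step ::
  "(nat \<Rightarrow> 'a::real_inner \<Rightarrow> real) \<Rightarrow> nat set \<Rightarrow> 'a \<Rightarrow> real \<Rightarrow> 'a" where
  "sgd_step fs S x \<gamma> = (if grad (fS fs S) x = 0 then x else x - \<gamma> *\<^sub>R grad (fS fs S) x)"

text \<open>state k = (x^k, gamma_k) for a fixed realisation ss of the minibatch sequence\<close>
primrec sgd_state ::
  "(nat \<Rightarrow> 'a::real_inner \<Rightarrow> real) \<Rightarrow> (nat set \<Rightarrow> real) \<Rightarrow> real \<Rightarrow> 'a \<Rightarrow> (nat \<Rightarrow> nat set)
     \<Rightarrow> nat \<Rightarrow> 'a \<times> real" where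
  "sgd_state fs ls \<gamma>b x0 ss 0 = (x0, polyak_cap fs ls (ss 0) x0 \<gamma>b)"
| "sgd_state fs ls \<gamma>b x0 ss (Suc k) =
     (let (x, \<gamma>) = sgd_state fs ls \<gamma>b x0 ss k;
          x' = sgd_step fs (ss k) x \<gamma>
      in (x', polyak_cap fs ls (ss (Suc k)) x' (\<gamma> * sqrt (real (Suc k))) / sqrt (real (Suc k) + 1)))"

definition sgd_x where "sgd_x fs ls \<gamma>b x0 ss k = fst (sgd_state fs ls \<gamma>b x0 ss k)"

text \<open>Expectation over i.i.d. uniform minibatches S_0,...,S_{K-1}: uniform average over all
  length-K lists of size-B subsets of [n]\<close>
definition batch_seqs :: "nat \<Rightarrow> nat \<Rightarrow> nat \<Rightarrow> nat set list set" where
  "batch_seqs n B K = {l. length l = K \<and> set l \<subseteq> batches n B}"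

definition expect_seq :: "nat \<Rightarrow> nat \<Rightarrow> nat \<Rightarrow> (nat set list \<Rightarrow> real) \<Rightarrow> real" where
  "expect_seq n B K h = (\<Sum>l\<in>batch_seqs n B K. h l) / real (card (batch_seqs n B K))"

end

theory Submission
  imports Defs
begin

text \<open>
  The scaled stepsize \<open>\<eta>\<^sub>k = \<gamma>\<^sub>k sqrt (k+1)\<close> obeys \<open>\<eta>\<^sub>k\<^sub>+\<^sub>1 = min (Polyak ratio) \<eta>\<^sub>k\<close>, and
  smoothness bounds the Polyak ratio \<open>(f\<^sub>S(x) - l\<^sub>S) / |grad f\<^sub>S(x)|\<^sup>2\<close> below by
  \<open>1 / (2 L\<^sub>m\<^sub>a\<^sub>x)\<close>. Hence \<open>\<eta>\<^sub>k\<close> stays in \<open>[1 / (2 L_tilde), \<gamma>\<^sub>b]\<close>, the stepsizes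
  \<open>\<gamma>\<^sub>k\<close> decrease, and \<open>1 / \<gamma>\<^sub>K\<^sub>-\<^sub>1 \<le> 2 L_tilde sqrt K\<close>.

  Strong convexity of the minibatch function \<open>f\<^sub>S\<close> at \<open>S = S\<^sub>k\<close> and the Polyak cap
  \<open>\<gamma>\<^sub>k |grad f\<^sub>S(x\<^sup>k)|\<^sup>2 \<le> (f\<^sub>S(x\<^sup>k) - l\<^sub>S) / sqrt (k+1)\<close> give
  \<open>r\<^sub>k\<^sub>+\<^sub>1 \<le> (1 - \<mu> \<gamma>\<^sub>k) r\<^sub>k - 2 \<gamma>\<^sub>k \<Delta>\<^sub>k + \<gamma>\<^sub>k (\<Delta>\<^sub>k + \<sigma>(S\<^sub>k)) / sqrt (k+1)\<close> for
  \<open>r\<^sub>k = |x\<^sup>k - x\<^sup>*|\<^sup>2\<close> and \<open>\<Delta>\<^sub>k = f\<^sub>S(x\<^sup>k) - f\<^sub>S(x\<^sup>*)\<close>. This first keeps \<open>r\<^sub>k \<le> D\<^sub>m\<^sub>a\<^sub>x\<close>;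
  then, divided by \<open>\<gamma>\<^sub>k\<close> and summed by parts against the decreasing \<open>\<gamma>\<^sub>k\<close>, it bounds
  \<open>\<Sum>\<^sub>k \<Delta>\<^sub>k\<close> by \<open>2 L_tilde D\<^sub>m\<^sub>a\<^sub>x sqrt K + \<Sum>\<^sub>k \<sigma>(S\<^sub>k) / sqrt (k+1)\<close> along every batch
  sequence. In expectation, \<open>S\<^sub>k\<close> is independent of \<open>x\<^sup>k\<close> and a uniform batch averages \<open>f\<^sub>S\<close>
  to \<open>f\<close>, so \<open>\<Delta>\<^sub>k\<close> becomes \<open>f(x\<^sup>k) - f(x\<^sup>*) \<ge> 0\<close>; Jensen's inequality for the averaged
  iterate finishes the proof.
\<close>

section \<open>Smooth and strongly convex functions\<close>

lemma gderiv_unique: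
  fixes f :: "'a::real_inner \<Rightarrow> real"
  assumes "GDERIV f x :> D" and "GDERIV f x :> D'"
  shows "D = D'"
proof -
  have "(\<lambda>h. h \<bullet> D) = (\<lambda>h. h \<bullet> D')"
    using has_derivative_unique assms unfolding gderiv_def by blast
  then have "(D - D') \<bullet> (D - D') = 0"
    by (metis inner_diff_left inner_diff_right inner_commute right_minus_eq)
  then show ?thesis by simp
qed

lemma grad_eqI:
  fixes f :: "'a::real_inner \<Rightarrow> real"
  assumes "GDERIV f x :> D"
  shows "grad f x = D"
  unfolding grad_def using assms gderiv_unique by (metis someI_ex)

lemma L_smooth_grad:
  fixes f :: "'a::real_inner \<Rightarrow> real"
  shows "L_smooth f L \<longleftrightarrow>
    (\<forall>x. GDERIV f x :> grad f x) \<and> (\<forall>x y. norm (grad f x - grad f y) \<le> L * norm (x - y))"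
proof
  assume "L_smooth f L"
  then obtain g where "\<forall>x. GDERIV f x :> g x" "\<forall>x y. norm (g x - g y) \<le> L * norm (x - y)"
    unfolding L_smooth_def by blast
  moreover from this have "grad f = g" using grad_eqI by blast
  ultimately show "(\<forall>x. GDERIV f x :> grad f x) \<and> (\<forall>x y. norm (grad f x - grad f y) \<le> L * norm (x - y))"
    by simp
qed (auto simp: L_smooth_def)

lemma L_smooth_mono:
  fixes f :: "'a::real_inner \<Rightarrow> real"
  assumes "L_smooth f L" and "L \<le> L'"
  shows "L_smooth f L'"
proof -
  have "L * norm (x - y) \<le> L' * norm (x - y)" for x y :: 'a
    using \<open>L \<le> L'\<close> by (simp add: mult_right_mono)
  with assms(1) show ?thesis unfolding L_smooth_def by (meson order_trans)
qed

lemma strongly_convex_mono: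
  fixes f :: "'a::real_normed_vector \<Rightarrow> real"
  assumes "strongly_convex f \<mu>" and "\<mu>' \<le> \<mu>"
  shows "strongly_convex f \<mu>'"
  unfolding strongly_convex_def
proof (intro allI impI)
  fix x y :: 'a and t :: real assume t: "0 \<le> t \<and> t \<le> 1"
  have "\<mu>' / 2 * t * (1 - t) * (norm (x - y))\<^sup>2 \<le> \<mu> / 2 * t * (1 - t) * (norm (x - y))\<^sup>2"
    using t \<open>\<mu>' \<le> \<mu>\<close> by (intro mult_right_mono) auto
  with assms(1)[unfolded strongly_convex_def, rule_format, of t x y] t
  show "f (t *\<^sub>R x + (1 - t) *\<^sub>R y)
      \<le> t * f x + (1 - t) * f y - \<mu>' / 2 * t * (1 - t) * (norm (x - y))\<^sup>2"
    by linarith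
qed

lemma strongly_convex_imp_convex_on:
  fixes f :: "'a::real_normed_vector \<Rightarrow> real"
  assumes "strongly_convex f \<mu>" and "0 \<le> \<mu>"
  shows "convex_on UNIV f"
proof -
  have sc0: "strongly_convex f 0" using assms strongly_convex_mono by blast
  show ?thesis
    unfolding convex_on_def
  proof (intro conjI convex_UNIV ballI allI impI)
    fix x y :: 'a and u v :: real assume "0 \<le> u" "0 \<le> v" "u + v = 1"
    then have "v = 1 - u" by simp
    with \<open>0 \<le> u\<close> \<open>0 \<le> v\<close> show "f (u *\<^sub>R x + v *\<^sub>R y) \<le> u * f x + v * f y"
      using sc0[unfolded strongly_convex_def, rule_format, of u x y] by simp
  qed
qed

lemma convex_on_mean_le:
  fixes f :: "'a::real_vector \<Rightarrow> real"
  assumes "convex_on UNIV f" and "0 < K"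
  shows "f ((1 / real K) *\<^sub>R (\<Sum>k<K. y k)) \<le> (\<Sum>k<K. f (y k)) / real K"
proof -
  have "f (\<Sum>k<K. (1 / real K) *\<^sub>R y k) \<le> (\<Sum>k<K. 1 / real K * f (y k))"
    using assms by (intro convex_on_sum) auto
  then show ?thesis by (simp add: scaleR_sum_right sum_divide_distrib)
qed

lemma has_real_derivative_along_line:
  fixes f :: "'a::real_inner \<Rightarrow> real"
  assumes "GDERIV f (x + t *\<^sub>R h) :> D"
  shows "((\<lambda>s. f (x + s *\<^sub>R h)) has_real_derivative (D \<bullet> h)) (at t)"
proof -
  have "((\<lambda>s. x + s *\<^sub>R h) has_derivative (\<lambda>s. s *\<^sub>R h)) (at t)"
    by (auto intro!: derivative_eq_intros)
  from has_derivative_compose[OF this assms[unfolded gderiv_def]]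
  have "((\<lambda>s. f (x + s *\<^sub>R h)) has_derivative (\<lambda>s. (s *\<^sub>R h) \<bullet> D)) (at t)"
    by (simp add: o_def)
  moreover have "(\<lambda>s. (s *\<^sub>R h) \<bullet> D) = (*) (D \<bullet> h)"
    by (auto simp: inner_commute)
  ultimately show ?thesis by (simp add: has_field_derivative_def)
qed

lemma L_smooth_descent:
  fixes f :: "'a::real_inner \<Rightarrow> real"
  assumes "L_smooth f L"
  shows "f y \<le> f x + grad f x \<bullet> (y - x) + L / 2 * (norm (y - x))\<^sup>2"
proof -
  note smooth = assms[unfolded L_smooth_grad]
  define h where "h = y - x"
  define \<phi> where "\<phi> t = f (x + t *\<^sub>R h) - t * (grad f x \<bullet> h) - L / 2 * t\<^sup>2 * (norm h)\<^sup>2" for t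
  have "\<phi> 1 \<le> \<phi> 0"
  proof (rule DERIV_nonpos_imp_nonincreasing[of 0 1])
    fix t :: real assume t: "0 \<le> t" "t \<le> 1"
    have "(\<phi> has_real_derivative
        grad f (x + t *\<^sub>R h) \<bullet> h - grad f x \<bullet> h - L / 2 * (2 * t) * (norm h)\<^sup>2) (at t)"
      unfolding \<phi>_def using smooth
      by (auto intro!: derivative_eq_intros has_real_derivative_along_line)
    moreover have "(grad f (x + t *\<^sub>R h) - grad f x) \<bullet> h \<le> L * t * (norm h)\<^sup>2"
    proof -
      have "(grad f (x + t *\<^sub>R h) - grad f x) \<bullet> h \<le> norm (grad f (x + t *\<^sub>R h) - grad f x) * norm h"
        by (rule norm_cauchy_schwarz)
      also have "\<dots> \<le> L * norm (t *\<^sub>R h) * norm h"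
        using smooth by (metis add_diff_cancel_left' mult_right_mono norm_ge_zero)
      finally show ?thesis using t by (simp add: power2_eq_square mult.assoc)
    qed
    ultimately show "\<exists>y. (\<phi> has_real_derivative y) (at t) \<and> y \<le> 0"
      by (auto simp: inner_diff_left)
  qed simp
  then show ?thesis unfolding \<phi>_def h_def by simp
qed

text \<open>Differentiating the defining inequality of strong convexity at the endpoint \<open>x\<close>.\<close>
lemma strongly_convex_gderiv_ge:
  fixes f :: "'a::real_inner \<Rightarrow> real"
  assumes sc: "strongly_convex f \<mu>" and D: "GDERIV f x :> D"
  shows "f x + D \<bullet> (y - x) + \<mu> / 2 * (norm (y - x))\<^sup>2 \<le> f y"
proof (rule ccontr)
  assume neg: "\<not> ?thesis"
  define h where "h = y - x"
  define C where "C = f y - f x - \<mu> / 2 * (norm h)\<^sup>2"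
  define \<psi> where "\<psi> s = f (x + s *\<^sub>R h) - f x - s * C - \<mu> / 2 * s\<^sup>2 * (norm h)\<^sup>2" for s
  have \<psi>_nonpos: "\<psi> s \<le> 0" if "0 \<le> s" "s \<le> 1" for s
  proof -
    have "f ((1 - s) *\<^sub>R x + (1 - (1 - s)) *\<^sub>R y)
        \<le> (1 - s) * f x + (1 - (1 - s)) * f y - \<mu> / 2 * (1 - s) * (1 - (1 - s)) * (norm (x - y))\<^sup>2"
      using sc[unfolded strongly_convex_def, rule_format, of "1 - s" x y] that by simp
    moreover have "(1 - s) *\<^sub>R x + (1 - (1 - s)) *\<^sub>R y = x + s *\<^sub>R h"
      by (simp add: h_def algebra_simps)
    moreover have "norm (x - y) = norm h"
      by (simp add: h_def norm_minus_commute)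
    moreover have "\<psi> s = f (x + s *\<^sub>R h) - ((1 - s) * f x + s * f y - \<mu> / 2 * (1 - s) * s * (norm h)\<^sup>2)"
      unfolding \<psi>_def C_def by (simp add: power2_eq_square field_simps)
    ultimately show ?thesis by simp
  qed
  have "(\<psi> has_real_derivative (D \<bullet> h - C)) (at 0)"
    unfolding \<psi>_def using D
    by (auto intro!: derivative_eq_intros has_real_derivative_along_line)
  moreover have "0 < D \<bullet> h - C"
    using neg unfolding C_def h_def by simp
  ultimately obtain d where "d > 0" and d: "\<And>s. 0 < s \<Longrightarrow> s < d \<Longrightarrow> \<psi> 0 < \<psi> s"
    using DERIV_pos_inc_right by (metis add_0)
  define s where "s = min (d / 2) 1"
  have "\<psi> 0 < \<psi> s" using d \<open>d > 0\<close> unfolding s_def by simp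
  moreover have "\<psi> s \<le> 0" using \<psi>_nonpos \<open>d > 0\<close> unfolding s_def by simp
  ultimately show False unfolding \<psi>_def by simp
qed

lemma strongly_convex_le_L_smooth:
  fixes f :: "'a::euclidean_space \<Rightarrow> real"
  assumes "strongly_convex f \<mu>" and "L_smooth f L"
  shows "\<mu> \<le> L"
proof -
  obtain v :: 'a where "v \<noteq> 0" using nonzero_Basis SOME_Basis by blast
  have "f 0 + grad f 0 \<bullet> v + \<mu> / 2 * (norm v)\<^sup>2 \<le> f 0 + grad f 0 \<bullet> v + L / 2 * (norm v)\<^sup>2"
    using strongly_convex_gderiv_ge[OF assms(1), of 0 "grad f 0" v] assms(2)
      L_smooth_descent[OF assms(2), of v 0] unfolding L_smooth_grad
    by simp
  with \<open>v \<noteq> 0\<close> show ?thesis by simp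
qed

lemma strongly_convex_bdd_below:
  fixes f :: "'a::real_inner \<Rightarrow> real"
  assumes "strongly_convex f \<mu>" and "0 < \<mu>" and "GDERIV f x :> D"
  shows "bdd_below (range f)"
proof (rule bdd_belowI2)
  fix y
  have "- (norm D)\<^sup>2 / (2 * \<mu>) \<le> - norm D * norm (y - x) + \<mu> / 2 * (norm (y - x))\<^sup>2"
  proof -
    have "0 \<le> (\<mu> * norm (y - x) - norm D)\<^sup>2 / (2 * \<mu>)" using \<open>0 < \<mu>\<close> by simp
    also have "\<dots> = - norm D * norm (y - x) + \<mu> / 2 * (norm (y - x))\<^sup>2 + (norm D)\<^sup>2 / (2 * \<mu>)"
      using \<open>0 < \<mu>\<close> by (simp add: field_simps power2_eq_square)
    finally show ?thesis by simp
  qed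
  moreover have "- norm D * norm (y - x) \<le> D \<bullet> (y - x)"
    using norm_cauchy_schwarz[of "- D" "y - x"] by simp
  moreover note strongly_convex_gderiv_ge[OF assms(1,3), of y]
  ultimately show "f x - (norm D)\<^sup>2 / (2 * \<mu>) \<le> f y" by linarith
qed

lemma L_smooth_sqnorm_grad_le:
  fixes f :: "'a::real_inner \<Rightarrow> real"
  assumes "L_smooth f L" and "0 < L" and lower: "\<And>y. m \<le> f y"
  shows "(norm (grad f x))\<^sup>2 / (2 * L) \<le> f x - m"
proof -
  define G where "G = grad f x"
  define y where "y = x - (1 / L) *\<^sub>R G"
  have "G \<bullet> (y - x) = - (norm G)\<^sup>2 / L"
    unfolding y_def by (simp add: power2_norm_eq_inner)
  moreover have "L / 2 * (norm (y - x))\<^sup>2 = (norm G)\<^sup>2 / (2 * L)"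
    unfolding y_def using \<open>0 < L\<close> by (simp add: power2_eq_square)
  moreover have "m \<le> f y" by (rule lower)
  ultimately show ?thesis
    using L_smooth_descent[OF assms(1), of y x] unfolding G_def by simp
qed

lemma gradient_step_sqdist_le:
  fixes f :: "'a::real_inner \<Rightarrow> real"
  assumes "strongly_convex f \<mu>" and "GDERIV f x :> G" and "0 \<le> \<gamma>"
  shows "(norm (x - \<gamma> *\<^sub>R G - z))\<^sup>2
    \<le> (1 - \<mu> * \<gamma>) * (norm (x - z))\<^sup>2 - 2 * \<gamma> * (f x - f z) + \<gamma>\<^sup>2 * (norm G)\<^sup>2"
proof -
  have "x - \<gamma> *\<^sub>R G - z = (x - z) - \<gamma> *\<^sub>R G" by simp
  then have "(norm (x - \<gamma> *\<^sub>R G - z))\<^sup>2 = (norm (x - z))\<^sup>2 - 2 * \<gamma> * (G \<bullet> (x - z)) + \<gamma>\<^sup>2 * (norm G)\<^sup>2"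
    unfolding power2_norm_eq_inner
    by (simp only:) (simp add: inner_diff_left inner_diff_right inner_commute power2_eq_square)
  moreover have "f x - f z + \<mu> / 2 * (norm (x - z))\<^sup>2 \<le> G \<bullet> (x - z)"
    using strongly_convex_gderiv_ge[OF assms(1,2), of z]
    by (simp add: norm_minus_commute inner_diff_right)
  then have "2 * \<gamma> * (f x - f z + \<mu> / 2 * (norm (x - z))\<^sup>2) \<le> 2 * \<gamma> * (G \<bullet> (x - z))"
    using \<open>0 \<le> \<gamma>\<close> by (simp add: mult_left_mono)
  ultimately show ?thesis by (simp add: algebra_simps)
qed

section \<open>Minibatch averages\<close>

lemma gderiv_fS:
  fixes fs :: "nat \<Rightarrow> 'a::real_inner \<Rightarrow> real"
  assumes "\<And>i. i \<in> S \<Longrightarrow> GDERIV (fs i) x :> g i"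
  shows "GDERIV (fS fs S) x :> (1 / real (card S)) *\<^sub>R (\<Sum>i\<in>S. g i)"
proof -
  have "((\<lambda>x. \<Sum>i\<in>S. fs i x) has_derivative (\<lambda>h. \<Sum>i\<in>S. h \<bullet> g i)) (at x)"
    using assms unfolding gderiv_def by (rule has_derivative_sum)
  then have "((\<lambda>x. 1 / real (card S) * (\<Sum>i\<in>S. fs i x)) has_derivative
      (\<lambda>h. 1 / real (card S) * (\<Sum>i\<in>S. h \<bullet> g i))) (at x)"
    by (rule has_derivative_mult_right)
  moreover have "(\<lambda>h. 1 / real (card S) * (\<Sum>i\<in>S. h \<bullet> g i))
      = (\<lambda>h. h \<bullet> ((1 / real (card S)) *\<^sub>R (\<Sum>i\<in>S. g i)))"
    by (simp add: inner_sum_right)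
  ultimately show ?thesis unfolding gderiv_def fS_def[abs_def] by simp
qed

lemma L_smooth_fS:
  fixes fs :: "nat \<Rightarrow> 'a::real_inner \<Rightarrow> real"
  assumes "finite S" and "S \<noteq> {}" and "\<And>i. i \<in> S \<Longrightarrow> L_smooth (fs i) L"
  shows "L_smooth (fS fs S) L"
proof -
  define g where "g x = (1 / real (card S)) *\<^sub>R (\<Sum>i\<in>S. grad (fs i) x)" for x
  have c: "0 < real (card S)" using assms by (simp add: card_gt_0_iff)
  have "GDERIV (fS fs S) x :> g x" for x
    unfolding g_def using assms(3) L_smooth_grad by (blast intro: gderiv_fS)
  moreover have "norm (g x - g y) \<le> L * norm (x - y)" for x y
  proof -
    have "norm (g x - g y) = norm (\<Sum>i\<in>S. grad (fs i) x - grad (fs i) y) / real (card S)"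
      unfolding g_def by (simp add: sum_subtractf flip: scaleR_diff_right)
    also have "\<dots> \<le> (\<Sum>i\<in>S. L * norm (x - y)) / real (card S)"
      using assms(3) c unfolding L_smooth_grad
      by (intro divide_right_mono order_trans[OF norm_sum sum_mono]) auto
    also have "\<dots> = L * norm (x - y)" using c by simp
    finally show ?thesis .
  qed
  ultimately show ?thesis unfolding L_smooth_def by blast
qed

lemma strongly_convex_fS:
  fixes fs :: "nat \<Rightarrow> 'a::real_normed_vector \<Rightarrow> real"
  assumes "finite S" and "S \<noteq> {}" and "\<And>i. i \<in> S \<Longrightarrow> strongly_convex (fs i) \<mu>"
  shows "strongly_convex (fS fs S) \<mu>"
  unfolding strongly_convex_def
proof (intro allI impI)
  fix x y :: 'a and t :: real assume "0 \<le> t \<and> t \<le> 1"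
  define q where "q = \<mu> / 2 * t * (1 - t) * (norm (x - y))\<^sup>2"
  have c: "0 < real (card S)" using assms by (simp add: card_gt_0_iff)
  have "(\<Sum>i\<in>S. fs i (t *\<^sub>R x + (1 - t) *\<^sub>R y)) \<le> (\<Sum>i\<in>S. t * fs i x + (1 - t) * fs i y - q)"
    using assms(3) \<open>0 \<le> t \<and> t \<le> 1\<close> unfolding strongly_convex_def q_def by (intro sum_mono) blast
  also have "\<dots> = t * (\<Sum>i\<in>S. fs i x) + (1 - t) * (\<Sum>i\<in>S. fs i y) - real (card S) * q"
    by (simp add: sum.distrib sum_subtractf sum_distrib_left)
  finally show "fS fs S (t *\<^sub>R x + (1 - t) *\<^sub>R y) \<le> t * fS fs S x + (1 - t) * fS fs S y - q"
    unfolding fS_def using c by (simp add: field_simps)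
qed

lemma fS_lessThan: "fS fs {..<n} x = (\<Sum>i<n. fs i x) / real n"
  unfolding fS_def by simp

section \<open>The SGD recursion\<close>

lemma sgd_step_eq: "sgd_step fs S x \<gamma> = x - \<gamma> *\<^sub>R grad (fS fs S) x"
  unfolding sgd_step_def by simp

lemma sgd_x_0: "sgd_x fs ls \<gamma>b x0 ss 0 = x0"
  unfolding sgd_x_def by simp

lemma sgd_x_Suc:
  "sgd_x fs ls \<gamma>b x0 ss (Suc k) = sgd_x fs ls \<gamma>b x0 ss k
     - snd (sgd_state fs ls \<gamma>b x0 ss k) *\<^sub>R grad (fS fs (ss k)) (sgd_x fs ls \<gamma>b x0 ss k)"
  unfolding sgd_x_def by (simp add: sgd_step_eq Let_def split: prod.split)

lemma sgd_state_cong: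
  "(\<And>j. j \<le> k \<Longrightarrow> ss j = ss' j) \<Longrightarrow> sgd_state fs ls \<gamma>b x0 ss k = sgd_state fs ls \<gamma>b x0 ss' k"
  by (induction k) (auto simp: Let_def)

lemma sgd_x_cong:
  assumes "\<And>j. j < k \<Longrightarrow> ss j = ss' j"
  shows "sgd_x fs ls \<gamma>b x0 ss k = sgd_x fs ls \<gamma>b x0 ss' k"
proof (cases k)
  case (Suc m)
  with assms have "sgd_state fs ls \<gamma>b x0 ss m = sgd_state fs ls \<gamma>b x0 ss' m" "ss m = ss' m"
    by (auto intro: sgd_state_cong)
  then show ?thesis unfolding Suc sgd_x_Suc by (simp add: sgd_x_def)
qed (simp add: sgd_x_0)

lemma polyak_cap_le: "polyak_cap fs ls S x c \<le> c"
  unfolding polyak_cap_def by auto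

lemma polyak_cap_ge:
  assumes "L_smooth (fS fs S) L" and "0 < L" and "\<And>y. ls S \<le> fS fs S y"
  shows "min (1 / (2 * L)) c \<le> polyak_cap fs ls S x c"
proof (cases "grad (fS fs S) x = 0")
  case False
  have "(norm (grad (fS fs S) x))\<^sup>2 / (2 * L) \<le> fS fs S x - ls S"
    using L_smooth_sqnorm_grad_le assms by blast
  then have "1 / (2 * L) \<le> (fS fs S x - ls S) / (norm (grad (fS fs S) x))\<^sup>2"
    using False \<open>0 < L\<close> by (simp add: field_simps)
  then show ?thesis using False unfolding polyak_cap_def by auto
qed (simp add: polyak_cap_def)

lemma polyak_cap_mult_sqnorm_grad_le:
  assumes "ls S \<le> fS fs S x"
  shows "polyak_cap fs ls S x c * (norm (grad (fS fs S) x))\<^sup>2 \<le> fS fs S x - ls S"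
proof (cases "grad (fS fs S) x = 0")
  case False
  then have "polyak_cap fs ls S x c \<le> (fS fs S x - ls S) / (norm (grad (fS fs S) x))\<^sup>2"
    unfolding polyak_cap_def by simp
  with False show ?thesis by (simp add: pos_le_divide_eq)
qed (use assms in \<open>simp add: polyak_cap_def\<close>)

lemma affine_step_le_bound:
  fixes r r' a b D :: real
  assumes "r' \<le> (1 - a) * r + b" and "0 \<le> r" and "r \<le> D" and "b \<le> a * D" and "b \<le> D"
  shows "r' \<le> D"
proof (cases "a \<le> 1")
  case True
  then have "(1 - a) * r \<le> (1 - a) * D" using \<open>r \<le> D\<close> by (simp add: mult_left_mono)
  with assms show ?thesis by (simp add: algebra_simps)
next
  case False
  then have "(1 - a) * r \<le> 0" using \<open>0 \<le> r\<close> by (simp add: mult_nonpos_nonneg)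
  with assms show ?thesis by linarith
qed

lemma sum_diff_div_antimono_le:
  fixes r \<gamma> :: "nat \<Rightarrow> real"
  assumes "\<And>k. k \<le> m \<Longrightarrow> r k \<le> D" and "\<And>k. k \<le> m \<Longrightarrow> 0 < \<gamma> k"
    and "\<And>k. k < m \<Longrightarrow> \<gamma> (Suc k) \<le> \<gamma> k"
  shows "(\<Sum>k\<le>m. (r k - r (Suc k)) / \<gamma> k) \<le> (D - r (Suc m)) / \<gamma> m"
  using assms
proof (induction m)
  case (Suc m)
  have "(\<Sum>k\<le>m. (r k - r (Suc k)) / \<gamma> k) \<le> (D - r (Suc m)) / \<gamma> m"
    using Suc.prems by (intro Suc.IH) auto
  also have "\<dots> \<le> (D - r (Suc m)) / \<gamma> (Suc m)"
    using Suc.prems by (intro divide_left_mono) auto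
  finally show ?case by (simp add: diff_divide_distrib)
qed (simp add: divide_right_mono)

lemma sum_inverse_sqrt_le: "(\<Sum>k<K. 1 / sqrt (real k + 1)) \<le> 2 * sqrt (real K)"
proof -
  have "1 / sqrt (real k + 1) \<le> 2 * sqrt (real (Suc k)) - 2 * sqrt (real k)" for k
  proof -
    define a b where "a = sqrt (real k)" and "b = sqrt (real k + 1)"
    have "0 < b" "b\<^sup>2 = a\<^sup>2 + 1" unfolding a_def b_def by simp_all
    then have "(2 * b - 2 * a) * b = 1 + (b - a)\<^sup>2"
      unfolding power2_eq_square by algebra
    then have "1 \<le> (2 * b - 2 * a) * b" by simp
    with \<open>0 < b\<close> show ?thesis unfolding a_def b_def by (simp add: divide_le_eq add.commute)
  qed
  then have "(\<Sum>k<K. 1 / sqrt (real k + 1)) \<le> (\<Sum>k<K. 2 * sqrt (real (Suc k)) - 2 * sqrt (real k))"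
    by (rule sum_mono)
  also have "\<dots> = 2 * sqrt (real K)"
    by (subst sum_lessThan_telescope) simp
  finally show ?thesis .
qed

section \<open>Uniformly random batch sequences\<close>

definition lists_of_len :: "'a set \<Rightarrow> nat \<Rightarrow> 'a list set" where
  "lists_of_len A m = {l. length l = m \<and> set l \<subseteq> A}"

lemma card_lists_of_len: "finite A \<Longrightarrow> card (lists_of_len A m) = card A ^ m"
  unfolding lists_of_len_def using card_lists_length_eq by (simp add: conj_commute)

lemma sum_lists_of_len_split:
  assumes "k < K"
  shows "(\<Sum>l\<in>lists_of_len A K. h l)
    = (\<Sum>p\<in>lists_of_len A k. \<Sum>S\<in>A. \<Sum>s\<in>lists_of_len A (K - Suc k). h (p @ S # s))"
proof -
  have "bij_betw (\<lambda>(p, S, s). p @ S # s)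
      (lists_of_len A k \<times> A \<times> lists_of_len A (K - Suc k)) (lists_of_len A K)"
  proof (rule bij_betw_byWitness[where f' = "\<lambda>l. (take k l, l ! k, drop (Suc k) l)"])
    show "(\<lambda>(p, S, s). p @ S # s) ` (lists_of_len A k \<times> A \<times> lists_of_len A (K - Suc k))
        \<subseteq> lists_of_len A K"
      using assms by (auto simp: lists_of_len_def)
    show "(\<lambda>l. (take k l, l ! k, drop (Suc k) l)) ` lists_of_len A K
        \<subseteq> lists_of_len A k \<times> A \<times> lists_of_len A (K - Suc k)"
      using assms by (auto simp: lists_of_len_def dest: in_set_takeD in_set_dropD)
  qed (use assms in \<open>auto simp: lists_of_len_def nth_append id_take_nth_drop[symmetric]\<close>)
  then show ?thesis
    by (simp add: sum.reindex_bij_betw[symmetric] sum.cartesian_product split_def)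
qed

text \<open>The \<open>k\<close>-th entry of a uniformly random list is uniform on \<open>A\<close> and independent of
  the first \<open>k\<close> entries.\<close>
lemma sum_lists_of_len_nth:
  assumes "finite A" and "k < K"
  shows "(\<Sum>l\<in>lists_of_len A K. F (take k l) (l ! k))
    = (\<Sum>l\<in>lists_of_len A K. (\<Sum>S\<in>A. F (take k l) S) / real (card A))"
proof (cases "A = {}")
  case False
  have "0 < real (card A)" using assms False by (simp add: card_gt_0_iff)
  then have "(\<Sum>S\<in>A. \<Sum>s\<in>X. F p S) = (\<Sum>S\<in>A. \<Sum>s\<in>X. (\<Sum>T\<in>A. F p T) / real (card A))"
    for p and X :: "'a list set"
    by (simp flip: sum_distrib_left)
  moreover have "take k (p @ S # s) = p" "(p @ S # s) ! k = S" if "p \<in> lists_of_len A k" for p S s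
    using that by (simp_all add: lists_of_len_def nth_append)
  ultimately show ?thesis
    unfolding sum_lists_of_len_split[OF \<open>k < K\<close>] by (simp cong: sum.cong)
next
  case True
  with \<open>k < K\<close> have "lists_of_len A K = {}" by (auto simp: lists_of_len_def)
  then show ?thesis by simp
qed

lemma finite_batches: "finite (batches n B)"
  unfolding batches_def by (rule finite_subset[of _ "Pow {..<n}"]) auto

lemma card_batches: "card (batches n B) = n choose B"
  unfolding batches_def using n_subsets[of "{..<n}" B] by simp

lemma card_batches_containing:
  assumes "i < n" and "1 \<le> B"
  shows "card {S \<in> batches n B. i \<in> S} = (n - 1) choose (B - 1)"
proof -
  have "bij_betw (insert i) {U. U \<subseteq> {..<n} - {i} \<and> card U = B - 1} {S \<in> batches n B. i \<in> S}"
  proof (rule bij_betw_byWitness[where f' = "\<lambda>S. S - {i}"])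
    have "card (insert i U) = B" if "U \<subseteq> {..<n} - {i}" "card U = B - 1" for U
    proof -
      from that have "finite U" "i \<notin> U" by (auto intro: finite_subset[of U "{..<n}"])
      with that \<open>1 \<le> B\<close> show ?thesis by simp
    qed
    then show "insert i ` {U. U \<subseteq> {..<n} - {i} \<and> card U = B - 1} \<subseteq> {S \<in> batches n B. i \<in> S}"
      using \<open>i < n\<close> by (auto simp: batches_def)
    show "(\<lambda>S. S - {i}) ` {S \<in> batches n B. i \<in> S} \<subseteq> {U. U \<subseteq> {..<n} - {i} \<and> card U = B - 1}"
      by (auto simp: batches_def)
  qed auto
  then have "card {S \<in> batches n B. i \<in> S} = card {U. U \<subseteq> {..<n} - {i} \<and> card U = B - 1}"
    by (rule bij_betw_same_card[symmetric])
  also have "\<dots> = (n - 1) choose (B - 1)"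
    using n_subsets[of "{..<n} - {i}" "B - 1"] \<open>i < n\<close> by simp
  finally show ?thesis .
qed

text \<open>Double counting: each index lies in \<open>(n-1 choose B-1)\<close> of the \<open>(n choose B)\<close> batches.\<close>
lemma average_fS_batches:
  assumes "1 \<le> B" and "B \<le> n"
  shows "(\<Sum>S\<in>batches n B. fS fs S x) / real (card (batches n B)) = fS fs {..<n} x"
proof -
  have "(\<Sum>S\<in>batches n B. \<Sum>i\<in>S. fs i x) = (\<Sum>S\<in>batches n B. \<Sum>i\<in>{i \<in> {..<n}. i \<in> S}. fs i x)"
    by (intro sum.cong) (auto simp: batches_def)
  also have "\<dots> = (\<Sum>i<n. \<Sum>S\<in>{S \<in> batches n B. i \<in> S}. fs i x)"
    using finite_batches by (subst sum.swap_restrict) auto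
  also have "\<dots> = (\<Sum>i<n. fs i x) * real ((n - 1) choose (B - 1))"
    using card_batches_containing \<open>1 \<le> B\<close> by (simp add: sum_distrib_right mult.commute)
  finally have "(\<Sum>S\<in>batches n B. fS fs S x) = (\<Sum>i<n. fs i x) * real ((n - 1) choose (B - 1)) / B"
    unfolding fS_def by (simp add: batches_def flip: sum_divide_distrib)
  also have "\<dots> = (\<Sum>i<n. fs i x) / n * real (n choose B)"
  proof -
    have "real B * real (n choose B) = real n * real ((n - 1) choose (B - 1))"
      using times_binomial_minus1_eq[of B n] \<open>1 \<le> B\<close> by (simp flip: of_nat_mult)
    with assms show ?thesis by (simp add: field_simps)
  qed
  finally show ?thesis
    using assms unfolding card_batches by (simp add: fS_def)
qed

section \<open>Convergence of SGD with decreasing Polyak stepsizes\<close>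

locale minibatch_polyak_sgd =
  fixes fs :: "nat \<Rightarrow> 'a::real_inner \<Rightarrow> real"
    and \<mu> L :: real and n B :: nat and ls :: "nat set \<Rightarrow> real"
    and \<gamma>b :: real and x0 xstar :: 'a
  assumes B_range: "1 \<le> B" "B \<le> n"
    and strongly_convex_subset: "\<And>S. S \<subseteq> {..<n} \<Longrightarrow> S \<noteq> {} \<Longrightarrow> strongly_convex (fS fs S) \<mu>"
    and L_smooth_subset: "\<And>S. S \<subseteq> {..<n} \<Longrightarrow> S \<noteq> {} \<Longrightarrow> L_smooth (fS fs S) L"
    and mu_pos: "0 < \<mu>" and mu_le_L: "\<mu> \<le> L"
    and ls_le_Inf: "\<And>S. S \<in> batches n B \<Longrightarrow> ls S \<le> (INF x. fS fs S x)"
    and xstar_min: "\<And>x. fS fs {..<n} xstar \<le> fS fs {..<n} x"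
    and gamma_b_pos: "0 < \<gamma>b"
begin

abbreviation X :: "(nat \<Rightarrow> nat set) \<Rightarrow> nat \<Rightarrow> 'a" where
  "X ss k \<equiv> sgd_x fs ls \<gamma>b x0 ss k"

abbreviation \<Gamma> :: "(nat \<Rightarrow> nat set) \<Rightarrow> nat \<Rightarrow> real" where
  "\<Gamma> ss k \<equiv> snd (sgd_state fs ls \<gamma>b x0 ss k)"

definition \<eta> :: "(nat \<Rightarrow> nat set) \<Rightarrow> nat \<Rightarrow> real" where
  "\<eta> ss k = \<Gamma> ss k * sqrt (real k + 1)"

definition \<sigma> :: "nat set \<Rightarrow> real" where
  "\<sigma> S = fS fs S xstar - ls S"

definition "\<sigma>_max = Max (\<sigma> ` batches n B)"

definition "\<sigma>_avg = (\<Sum>S\<in>batches n B. \<sigma> S) / real (card (batches n B))"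

definition "L_tilde = max L (1 / (2 * \<gamma>b))"

definition "D_max = max ((norm (x0 - xstar))\<^sup>2) (2 * \<gamma>b * \<sigma>_max / min (\<mu> / (2 * L)) (\<mu> * \<gamma>b))"

lemma L_pos: "0 < L"
  using mu_pos mu_le_L by linarith

lemma batch_subset: "S \<in> batches n B \<Longrightarrow> S \<subseteq> {..<n} \<and> S \<noteq> {}"
  using B_range by (auto simp: batches_def)

lemma ls_le_fS:
  assumes "S \<in> batches n B"
  shows "ls S \<le> fS fs S y"
proof -
  from batch_subset[OF assms] have S: "S \<subseteq> {..<n}" "S \<noteq> {}" by auto
  then have "GDERIV (fS fs S) y :> grad (fS fs S) y"
    using L_smooth_subset L_smooth_grad by blast
  \<comment> \<open>\<open>INF\<close> is only meaningful for functions bounded below.\<close>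
  then have "bdd_below (range (fS fs S))"
    by (rule strongly_convex_bdd_below[OF strongly_convex_subset[OF S] mu_pos])
  then have "(INF x. fS fs S x) \<le> fS fs S y" by (rule cINF_lower) simp
  with ls_le_Inf[OF assms] show ?thesis by linarith
qed

lemma sigma_nonneg: "S \<in> batches n B \<Longrightarrow> 0 \<le> \<sigma> S"
  unfolding \<sigma>_def using ls_le_fS by simp

lemma sigma_le_sigma_max: "S \<in> batches n B \<Longrightarrow> \<sigma> S \<le> \<sigma>_max"
  unfolding \<sigma>_max_def using finite_batches by simp

lemma sigma_avg_nonneg: "0 \<le> \<sigma>_avg"
  unfolding \<sigma>_avg_def using sigma_nonneg by (simp add: sum_nonneg)

lemma D_max_nonneg: "0 \<le> D_max"
  unfolding D_max_def by (simp add: le_max_iff_disj)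

lemma sigma_le_D_max:
  assumes "S \<in> batches n B"
  shows "2 * \<sigma> S \<le> \<mu> * D_max" and "4 * \<gamma>b * \<sigma> S \<le> D_max"
proof -
  define m where "m = min (\<mu> / (2 * L)) (\<mu> * \<gamma>b)"
  have "\<mu> / (2 * L) \<le> 1 / 2" using mu_le_L L_pos by (simp add: field_simps)
  moreover have "0 < m" "m \<le> \<mu> * \<gamma>b" "m \<le> \<mu> / (2 * L)"
    using mu_pos L_pos gamma_b_pos unfolding m_def by auto
  ultimately have m: "0 < m" "m \<le> \<mu> * \<gamma>b" "m \<le> 1 / 2" by linarith+
  have "2 * \<gamma>b * \<sigma> S \<le> 2 * \<gamma>b * \<sigma>_max"
    using sigma_le_sigma_max[OF assms] gamma_b_pos by simp
  also have "\<dots> \<le> m * D_max"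
  proof -
    have "2 * \<gamma>b * \<sigma>_max / m \<le> D_max" unfolding D_max_def m_def by simp
    with \<open>0 < m\<close> show ?thesis by (simp add: pos_divide_le_eq mult.commute)
  qed
  finally have "2 * \<gamma>b * \<sigma> S \<le> m * D_max" .
  moreover have "m * D_max \<le> (\<mu> * \<gamma>b) * D_max" "m * D_max \<le> 1 / 2 * D_max"
    using m D_max_nonneg by (simp_all only: mult_right_mono)
  ultimately have "\<gamma>b * (2 * \<sigma> S) \<le> \<gamma>b * (\<mu> * D_max)" "4 * \<gamma>b * \<sigma> S \<le> D_max"
    by (simp_all add: algebra_simps)
  with gamma_b_pos show "2 * \<sigma> S \<le> \<mu> * D_max" and "4 * \<gamma>b * \<sigma> S \<le> D_max"
    by simp_all
qed

lemma \<eta>_0: "\<eta> ss 0 = polyak_cap fs ls (ss 0) x0 \<gamma>b"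
  unfolding \<eta>_def by simp

lemma \<eta>_Suc: "\<eta> ss (Suc k) = polyak_cap fs ls (ss (Suc k)) (X ss (Suc k)) (\<eta> ss k)"
proof -
  have "0 < sqrt (real (Suc k) + 1)" by simp
  then show ?thesis
    unfolding \<eta>_def sgd_x_def by (simp add: Let_def add.commute split: prod.split)
qed

lemma inverse_L_tilde_le: "1 / (2 * L_tilde) \<le> 1 / (2 * L)" "1 / (2 * L_tilde) \<le> \<gamma>b"
  using L_pos gamma_b_pos unfolding L_tilde_def by (auto simp: field_simps max_def)

lemma polyak_cap_batch_ge:
  assumes "S \<in> batches n B"
  shows "min (1 / (2 * L)) c \<le> polyak_cap fs ls S x c"
proof -
  from batch_subset[OF assms] have "S \<subseteq> {..<n}" "S \<noteq> {}" by auto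
  then show ?thesis
    by (rule polyak_cap_ge[OF L_smooth_subset L_pos]) (rule ls_le_fS[OF assms])
qed

lemma \<eta>_Suc_le: "\<eta> ss (Suc k) \<le> \<eta> ss k"
  unfolding \<eta>_Suc by (rule polyak_cap_le)

lemma \<eta>_bounds:
  assumes "\<And>j. j \<le> k \<Longrightarrow> ss j \<in> batches n B"
  shows "1 / (2 * L_tilde) \<le> \<eta> ss k \<and> \<eta> ss k \<le> \<gamma>b"
  using assms
proof (induction k)
  case 0
  then have "min (1 / (2 * L)) \<gamma>b \<le> \<eta> ss 0"
    unfolding \<eta>_0 by (simp add: polyak_cap_batch_ge)
  then show ?case using inverse_L_tilde_le polyak_cap_le by (auto simp: \<eta>_0)
next
  case (Suc k)
  then have "1 / (2 * L_tilde) \<le> \<eta> ss k" "\<eta> ss k \<le> \<gamma>b" by auto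
  moreover have "min (1 / (2 * L)) (\<eta> ss k) \<le> \<eta> ss (Suc k)"
    unfolding \<eta>_Suc using Suc.prems[of "Suc k"] by (simp add: polyak_cap_batch_ge)
  ultimately show ?case using inverse_L_tilde_le \<eta>_Suc_le[of ss k] by auto
qed

lemma \<eta>_mult_sqnorm_grad_le:
  assumes "ss k \<in> batches n B"
  shows "\<eta> ss k * (norm (grad (fS fs (ss k)) (X ss k)))\<^sup>2 \<le> fS fs (ss k) (X ss k) - ls (ss k)"
  using assms ls_le_fS by (cases k) (simp_all add: \<eta>_0 \<eta>_Suc sgd_x_0 polyak_cap_mult_sqnorm_grad_le)

lemma \<Gamma>_eq: "\<Gamma> ss k = \<eta> ss k / sqrt (real k + 1)"
  unfolding \<eta>_def by simp

lemma L_tilde_pos: "0 < L_tilde"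
  using L_pos unfolding L_tilde_def by simp

lemma \<eta>_pos:
  assumes "\<And>j. j \<le> k \<Longrightarrow> ss j \<in> batches n B"
  shows "0 < \<eta> ss k"
proof -
  have "0 < 1 / (2 * L_tilde)" using L_tilde_pos by simp
  also have "\<dots> \<le> \<eta> ss k" using \<eta>_bounds assms by blast
  finally show ?thesis .
qed

lemma \<Gamma>_pos: "(\<And>j. j \<le> k \<Longrightarrow> ss j \<in> batches n B) \<Longrightarrow> 0 < \<Gamma> ss k"
  unfolding \<Gamma>_eq using \<eta>_pos by simp

lemma \<Gamma>_le_\<gamma>b: "(\<And>j. j \<le> k \<Longrightarrow> ss j \<in> batches n B) \<Longrightarrow> \<Gamma> ss k \<le> \<gamma>b"
proof -
  assume "\<And>j. j \<le> k \<Longrightarrow> ss j \<in> batches n B"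
  then have "\<eta> ss k \<le> \<gamma>b" using \<eta>_bounds by blast
  also have "\<gamma>b \<le> \<gamma>b * sqrt (real k + 1)" using gamma_b_pos by simp
  finally show ?thesis unfolding \<Gamma>_eq by (simp add: divide_le_eq)
qed

lemma \<Gamma>_Suc_le:
  assumes "\<And>j. j \<le> k \<Longrightarrow> ss j \<in> batches n B"
  shows "\<Gamma> ss (Suc k) \<le> \<Gamma> ss k"
proof -
  have "0 < \<eta> ss k" using assms by (rule \<eta>_pos)
  have "\<Gamma> ss (Suc k) \<le> \<eta> ss k / sqrt (real (Suc k) + 1)"
    unfolding \<Gamma>_eq by (intro divide_right_mono \<eta>_Suc_le) simp
  also have "\<dots> \<le> \<eta> ss k / sqrt (real k + 1)"
    using \<open>0 < \<eta> ss k\<close> by (intro divide_left_mono) auto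
  finally show ?thesis unfolding \<Gamma>_eq .
qed

lemma inverse_\<Gamma>_le:
  assumes "\<And>j. j \<le> k \<Longrightarrow> ss j \<in> batches n B"
  shows "1 / \<Gamma> ss k \<le> 2 * L_tilde * sqrt (real k + 1)"
proof -
  have "1 / (2 * L_tilde) \<le> \<eta> ss k" using \<eta>_bounds assms by blast
  moreover have "0 < \<eta> ss k" using assms by (rule \<eta>_pos)
  ultimately have "1 / \<eta> ss k \<le> 2 * L_tilde"
    using L_tilde_pos by (simp add: divide_le_eq mult.commute)
  have "1 / \<Gamma> ss k = sqrt (real k + 1) * (1 / \<eta> ss k)"
    unfolding \<Gamma>_eq by simp
  also have "\<dots> \<le> sqrt (real k + 1) * (2 * L_tilde)"
    using \<open>1 / \<eta> ss k \<le> 2 * L_tilde\<close> by (rule mult_left_mono) simp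
  finally show ?thesis by (simp add: mult_ac)
qed

lemma sqdist_step_le:
  assumes "\<And>j. j \<le> k \<Longrightarrow> ss j \<in> batches n B"
  shows "(norm (X ss (Suc k) - xstar))\<^sup>2
    \<le> (1 - \<mu> * \<Gamma> ss k) * (norm (X ss k - xstar))\<^sup>2
      - 2 * \<Gamma> ss k * (fS fs (ss k) (X ss k) - fS fs (ss k) xstar)
      + \<Gamma> ss k * (fS fs (ss k) (X ss k) - fS fs (ss k) xstar + \<sigma> (ss k)) / sqrt (real k + 1)"
proof -
  define S x \<gamma> G where "S = ss k" and "x = X ss k" and "\<gamma> = \<Gamma> ss k" and "G = grad (fS fs S) x"
  have "S \<in> batches n B" unfolding S_def using assms by simp
  then have S: "S \<subseteq> {..<n}" "S \<noteq> {}" using batch_subset by auto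
  have "0 < \<gamma>" unfolding \<gamma>_def using assms by (rule \<Gamma>_pos)
  have "X ss (Suc k) = x - \<gamma> *\<^sub>R G" unfolding x_def \<gamma>_def G_def S_def by (rule sgd_x_Suc)
  moreover have "GDERIV (fS fs S) x :> G"
    unfolding G_def using L_smooth_subset[OF S] L_smooth_grad by blast
  ultimately have "(norm (X ss (Suc k) - xstar))\<^sup>2
      \<le> (1 - \<mu> * \<gamma>) * (norm (x - xstar))\<^sup>2 - 2 * \<gamma> * (fS fs S x - fS fs S xstar) + \<gamma>\<^sup>2 * (norm G)\<^sup>2"
    using gradient_step_sqdist_le[OF strongly_convex_subset[OF S]] \<open>0 < \<gamma>\<close> by simp
  moreover have "\<gamma>\<^sup>2 * (norm G)\<^sup>2 \<le> \<gamma> * (fS fs S x - ls S) / sqrt (real k + 1)"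
  proof -
    have "\<gamma>\<^sup>2 * (norm G)\<^sup>2 = \<gamma> * (\<eta> ss k * (norm G)\<^sup>2) / sqrt (real k + 1)"
      unfolding \<gamma>_def \<Gamma>_eq by (simp add: power2_eq_square)
    also have "\<dots> \<le> \<gamma> * (fS fs S x - ls S) / sqrt (real k + 1)"
      using \<eta>_mult_sqnorm_grad_le[of ss k] assms \<open>0 < \<gamma>\<close>
      unfolding S_def x_def G_def by (intro divide_right_mono mult_left_mono) auto
    finally show ?thesis .
  qed
  ultimately show ?thesis
    unfolding S_def x_def \<gamma>_def \<sigma>_def by simp
qed

lemma sqdist_contraction:
  assumes "\<And>j. j \<le> k \<Longrightarrow> ss j \<in> batches n B"
  shows "(norm (X ss (Suc k) - xstar))\<^sup>2
    \<le> (1 - \<mu> * \<Gamma> ss k) * (norm (X ss k - xstar))\<^sup>2 + 2 * \<Gamma> ss k * \<sigma> (ss k)"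
proof -
  define \<Delta> where "\<Delta> = fS fs (ss k) (X ss k) - fS fs (ss k) xstar"
  have "0 < \<Gamma> ss k" using assms by (rule \<Gamma>_pos)
  have "0 \<le> \<Delta> + \<sigma> (ss k)"
    unfolding \<Delta>_def \<sigma>_def using ls_le_fS assms by simp
  then have "\<Gamma> ss k * (\<Delta> + \<sigma> (ss k)) / sqrt (real k + 1) \<le> \<Gamma> ss k * (\<Delta> + \<sigma> (ss k)) / 1"
    using \<open>0 < \<Gamma> ss k\<close> by (intro divide_left_mono) auto
  moreover have "0 \<le> \<Gamma> ss k * (\<Delta> + \<sigma> (ss k))"
    using \<open>0 < \<Gamma> ss k\<close> \<open>0 \<le> \<Delta> + \<sigma> (ss k)\<close> by simp
  ultimately show ?thesis
    using sqdist_step_le[of k ss, OF assms] unfolding \<Delta>_def[symmetric] by (simp add: algebra_simps)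
qed

lemma sqdist_le_D_max:
  assumes "\<And>j. j < k \<Longrightarrow> ss j \<in> batches n B"
  shows "(norm (X ss k - xstar))\<^sup>2 \<le> D_max"
  using assms
proof (induction k)
  case 0
  then show ?case unfolding D_max_def by (simp add: sgd_x_0)
next
  case (Suc k)
  then have prefix: "\<And>j. j \<le> k \<Longrightarrow> ss j \<in> batches n B" by simp
  have "0 < \<Gamma> ss k" using prefix by (rule \<Gamma>_pos)
  have "\<Gamma> ss k \<le> \<gamma>b" using prefix by (rule \<Gamma>_le_\<gamma>b)
  have "2 * \<Gamma> ss k * \<sigma> (ss k) \<le> \<mu> * \<Gamma> ss k * D_max"
    using sigma_le_D_max(1)[of "ss k"] prefix \<open>0 < \<Gamma> ss k\<close> by (simp add: mult_left_mono)
  moreover have "2 * \<Gamma> ss k * \<sigma> (ss k) \<le> D_max"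
  proof -
    have "2 * \<Gamma> ss k * \<sigma> (ss k) \<le> 4 * \<gamma>b * \<sigma> (ss k)"
      using \<open>\<Gamma> ss k \<le> \<gamma>b\<close> \<open>0 < \<Gamma> ss k\<close> sigma_nonneg[of "ss k"] prefix
      by (intro mult_right_mono) auto
    moreover have "4 * \<gamma>b * \<sigma> (ss k) \<le> D_max" using sigma_le_D_max(2) prefix by simp
    ultimately show ?thesis by linarith
  qed
  ultimately show ?case
    using affine_step_le_bound[OF sqdist_contraction[of k ss, OF prefix]] Suc by simp
qed

lemma gap_step_le:
  assumes "\<And>j. j \<le> k \<Longrightarrow> ss j \<in> batches n B"
  shows "(2 - 1 / sqrt (real k + 1)) * (fS fs (ss k) (X ss k) - fS fs (ss k) xstar)
    \<le> ((norm (X ss k - xstar))\<^sup>2 - (norm (X ss (Suc k) - xstar))\<^sup>2) / \<Gamma> ss k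
      + \<sigma> (ss k) / sqrt (real k + 1)"
proof -
  define \<Delta> r r' \<gamma> c where "\<Delta> = fS fs (ss k) (X ss k) - fS fs (ss k) xstar"
    and "r = (norm (X ss k - xstar))\<^sup>2" and "r' = (norm (X ss (Suc k) - xstar))\<^sup>2"
    and "\<gamma> = \<Gamma> ss k" and "c = sqrt (real k + 1)"
  have "0 < \<gamma>" unfolding \<gamma>_def using assms by (rule \<Gamma>_pos)
  have "r' \<le> (1 - \<mu> * \<gamma>) * r - 2 * \<gamma> * \<Delta> + \<gamma> * (\<Delta> + \<sigma> (ss k)) / c"
    using sqdist_step_le[of k ss, OF assms] unfolding \<Delta>_def r_def r'_def \<gamma>_def c_def .
  moreover have "0 \<le> \<mu> * \<gamma> * r" using mu_pos \<open>0 < \<gamma>\<close> unfolding r_def by simp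
  moreover have "\<gamma> * (\<Delta> + \<sigma> (ss k)) / c = \<gamma> * \<Delta> / c + \<gamma> * (\<sigma> (ss k) / c)"
    by (simp add: distrib_left add_divide_distrib)
  moreover have "\<gamma> * ((2 - 1 / c) * \<Delta>) = 2 * \<gamma> * \<Delta> - \<gamma> * \<Delta> / c"
    by (simp add: algebra_simps)
  ultimately have "\<gamma> * ((2 - 1 / c) * \<Delta>) \<le> (r - r') + \<gamma> * (\<sigma> (ss k) / c)"
    by (simp add: algebra_simps)
  then have "(2 - 1 / c) * \<Delta> \<le> ((r - r') + \<gamma> * (\<sigma> (ss k) / c)) / \<gamma>"
    by (subst pos_le_divide_eq[OF \<open>0 < \<gamma>\<close>]) (simp add: mult.commute)
  also have "\<dots> = (r - r') / \<gamma> + \<sigma> (ss k) / c"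
    using \<open>0 < \<gamma>\<close> by (simp add: add_divide_distrib)
  finally show ?thesis
    unfolding \<Delta>_def r_def r'_def \<gamma>_def c_def .
qed

lemma trajectory_gap_le:
  assumes "1 \<le> K" and "\<And>k. k < K \<Longrightarrow> ss k \<in> batches n B"
  shows "(\<Sum>k<K. (2 - 1 / sqrt (real k + 1)) * (fS fs (ss k) (X ss k) - fS fs (ss k) xstar))
    \<le> 2 * L_tilde * D_max * sqrt (real K) + (\<Sum>k<K. \<sigma> (ss k) / sqrt (real k + 1))"
proof -
  define r where "r k = (norm (X ss k - xstar))\<^sup>2" for k
  obtain m where K: "K = Suc m" using \<open>1 \<le> K\<close> by (cases K) auto
  have prefix: "\<And>j. j \<le> k \<Longrightarrow> ss j \<in> batches n B" if "k \<le> m" for k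
    using assms(2) that K by simp
  then have "0 < \<Gamma> ss m" by (simp add: \<Gamma>_pos)
  have "(\<Sum>k<K. (2 - 1 / sqrt (real k + 1)) * (fS fs (ss k) (X ss k) - fS fs (ss k) xstar))
      \<le> (\<Sum>k\<le>m. (r k - r (Suc k)) / \<Gamma> ss k) + (\<Sum>k<K. \<sigma> (ss k) / sqrt (real k + 1))"
    unfolding K lessThan_Suc_atMost sum.distrib[symmetric] r_def
    using prefix by (intro sum_mono gap_step_le) auto
  also have "(\<Sum>k\<le>m. (r k - r (Suc k)) / \<Gamma> ss k) \<le> (D_max - r (Suc m)) / \<Gamma> ss m"
    unfolding r_def using prefix K assms(2)
    by (intro sum_diff_div_antimono_le sqdist_le_D_max \<Gamma>_pos \<Gamma>_Suc_le) auto
  also have "\<dots> \<le> D_max * (1 / \<Gamma> ss m)"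
    using \<open>0 < \<Gamma> ss m\<close> unfolding r_def by (simp add: divide_right_mono)
  also have "\<dots> \<le> D_max * (2 * L_tilde * sqrt (real K))"
    using inverse_\<Gamma>_le[of m ss] prefix D_max_nonneg K by (intro mult_left_mono) (auto simp: add.commute)
  finally show ?thesis by (simp add: mult_ac)
qed

lemma batch_seqs_eq: "batch_seqs n B K = lists_of_len (batches n B) K"
  unfolding batch_seqs_def lists_of_len_def ..

lemma card_batch_seqs_pos: "0 < card (batch_seqs n B K)"
  unfolding batch_seqs_eq card_lists_of_len[OF finite_batches] card_batches
  using B_range by simp

lemma sgd_x_nth_take: "X (\<lambda>j. l ! j) k = X (\<lambda>j. take k l ! j) k"
  by (rule sgd_x_cong) simp

text \<open>The batch \<open>S_k\<close> is independent of \<open>x^k\<close>, so in expectation the batch gap at \<open>x^k\<close>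
  is the full gap.\<close>
lemma sum_batch_seqs_gap:
  assumes "k < K"
  shows "(\<Sum>l\<in>batch_seqs n B K. fS fs {..<n} (X (\<lambda>j. l ! j) k) - fS fs {..<n} xstar)
    = (\<Sum>l\<in>batch_seqs n B K. fS fs (l ! k) (X (\<lambda>j. l ! j) k) - fS fs (l ! k) xstar)"
proof -
  have avg: "(\<Sum>S\<in>batches n B. fS fs S x - fS fs S xstar) / real (card (batches n B))
      = fS fs {..<n} x - fS fs {..<n} xstar" for x
    by (simp add: sum_subtractf diff_divide_distrib average_fS_batches[OF B_range])
  define F where "F p S = fS fs S (X (\<lambda>j. p ! j) k) - fS fs S xstar" for p S
  have "(\<Sum>l\<in>batch_seqs n B K. fS fs (l ! k) (X (\<lambda>j. l ! j) k) - fS fs (l ! k) xstar)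
      = (\<Sum>l\<in>batch_seqs n B K. F (take k l) (l ! k))"
    unfolding F_def by (simp flip: sgd_x_nth_take)
  also have "\<dots> = (\<Sum>l\<in>batch_seqs n B K. (\<Sum>S\<in>batches n B. F (take k l) S) / real (card (batches n B)))"
    unfolding batch_seqs_eq by (rule sum_lists_of_len_nth[OF finite_batches assms])
  also have "\<dots> = (\<Sum>l\<in>batch_seqs n B K. fS fs {..<n} (X (\<lambda>j. l ! j) k) - fS fs {..<n} xstar)"
    unfolding F_def avg by (simp flip: sgd_x_nth_take)
  finally show ?thesis ..
qed

lemma sum_batch_seqs_sigma:
  assumes "k < K"
  shows "(\<Sum>l\<in>batch_seqs n B K. \<sigma> (l ! k)) = real (card (batch_seqs n B K)) * \<sigma>_avg"
  using sum_lists_of_len_nth[OF finite_batches assms, of "\<lambda>_ S. \<sigma> S"]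
  unfolding batch_seqs_eq \<sigma>_avg_def by simp

text \<open>Pathwise the batch gaps may be negative; only their averages over batches are
  nonnegative, which is what allows the weights \<open>2 - 1 / sqrt (k+1) \<ge> 1\<close> to be inserted.\<close>
lemma sum_batch_seqs_gap_le_weighted:
  assumes "k < K"
  shows "(\<Sum>l\<in>batch_seqs n B K. fS fs {..<n} (X (\<lambda>j. l ! j) k) - fS fs {..<n} xstar)
    \<le> (\<Sum>l\<in>batch_seqs n B K. (2 - 1 / sqrt (real k + 1))
          * (fS fs (l ! k) (X (\<lambda>j. l ! j) k) - fS fs (l ! k) xstar))"
proof -
  define G where "G = (\<Sum>l\<in>batch_seqs n B K. fS fs {..<n} (X (\<lambda>j. l ! j) k) - fS fs {..<n} xstar)"
  have "0 \<le> G" unfolding G_def using xstar_min by (simp add: sum_nonneg)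
  moreover have "1 \<le> 2 - 1 / sqrt (real k + 1)" by (simp add: divide_le_eq)
  ultimately have "G \<le> (2 - 1 / sqrt (real k + 1)) * G"
    by (simp add: mult_le_cancel_right1)
  then show ?thesis
    unfolding G_def sum_batch_seqs_gap[OF assms] by (simp add: sum_distrib_left)
qed

lemma sum_batch_seqs_iterates_gap_le:
  assumes "1 \<le> K"
  shows "(\<Sum>l\<in>batch_seqs n B K. \<Sum>k<K. fS fs {..<n} (X (\<lambda>j. l ! j) k) - fS fs {..<n} xstar)
    \<le> real (card (batch_seqs n B K)) * (2 * L_tilde * D_max + 2 * \<sigma>_avg) * sqrt (real K)"
proof -
  define T N where "T = batch_seqs n B K" and "N = real (card (batch_seqs n B K))"
  have "(\<Sum>l\<in>T. \<Sum>k<K. fS fs {..<n} (X (\<lambda>j. l ! j) k) - fS fs {..<n} xstar)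
      \<le> (\<Sum>k<K. \<Sum>l\<in>T. (2 - 1 / sqrt (real k + 1))
          * (fS fs (l ! k) (X (\<lambda>j. l ! j) k) - fS fs (l ! k) xstar))"
    unfolding T_def by (subst sum.swap) (intro sum_mono sum_batch_seqs_gap_le_weighted, simp)
  also have "\<dots> \<le> (\<Sum>l\<in>T. 2 * L_tilde * D_max * sqrt (real K) + (\<Sum>k<K. \<sigma> (l ! k) / sqrt (real k + 1)))"
    unfolding T_def batch_seqs_def
    by (subst sum.swap) (intro sum_mono trajectory_gap_le[OF assms], auto)
  also have "\<dots> = N * (2 * L_tilde * D_max * sqrt (real K)) + (\<Sum>k<K. N * \<sigma>_avg / sqrt (real k + 1))"
  proof -
    have "(\<Sum>l\<in>T. \<Sum>k<K. \<sigma> (l ! k) / sqrt (real k + 1))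
        = (\<Sum>k<K. (\<Sum>l\<in>T. \<sigma> (l ! k)) / sqrt (real k + 1))"
      by (subst sum.swap) (simp add: sum_divide_distrib)
    also have "\<dots> = (\<Sum>k<K. N * \<sigma>_avg / sqrt (real k + 1))"
      unfolding T_def N_def by (intro sum.cong) (simp_all add: sum_batch_seqs_sigma)
    finally show ?thesis unfolding N_def T_def by (simp add: sum.distrib)
  qed
  also have "\<dots> \<le> N * (2 * L_tilde * D_max * sqrt (real K)) + N * \<sigma>_avg * (2 * sqrt (real K))"
  proof -
    have "(\<Sum>k<K. N * \<sigma>_avg / sqrt (real k + 1)) = N * \<sigma>_avg * (\<Sum>k<K. 1 / sqrt (real k + 1))"
      by (simp add: sum_distrib_left)
    also have "\<dots> \<le> N * \<sigma>_avg * (2 * sqrt (real K))"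
      using sum_inverse_sqrt_le sigma_avg_nonneg unfolding N_def by (intro mult_left_mono) auto
    finally show ?thesis by simp
  qed
  finally show ?thesis
    unfolding T_def N_def by (simp add: algebra_simps)
qed

theorem expected_gap_le:
  assumes "1 \<le> K"
  shows "expect_seq n B K
      (\<lambda>l. fS fs {..<n} ((1 / real K) *\<^sub>R (\<Sum>k<K. X (\<lambda>j. l ! j) k)) - fS fs {..<n} xstar)
    \<le> (2 * L_tilde * D_max + 2 * \<sigma>_avg) / sqrt (real K)"
proof -
  define T N C where "T = batch_seqs n B K" and "N = real (card (batch_seqs n B K))"
    and "C = 2 * L_tilde * D_max + 2 * \<sigma>_avg"
  have "convex_on UNIV (fS fs {..<n})"
    using strongly_convex_subset[of "{..<n}"] B_range mu_pos
    by (intro strongly_convex_imp_convex_on[of _ \<mu>]) (auto simp: lessThan_empty_iff)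
  then have "fS fs {..<n} ((1 / real K) *\<^sub>R (\<Sum>k<K. X (\<lambda>j. l ! j) k)) - fS fs {..<n} xstar
      \<le> (\<Sum>k<K. fS fs {..<n} (X (\<lambda>j. l ! j) k) - fS fs {..<n} xstar) / real K" for l
    using convex_on_mean_le[of "fS fs {..<n}" K] assms by (simp add: sum_subtractf diff_divide_distrib)
  then have "expect_seq n B K
      (\<lambda>l. fS fs {..<n} ((1 / real K) *\<^sub>R (\<Sum>k<K. X (\<lambda>j. l ! j) k)) - fS fs {..<n} xstar)
    \<le> (\<Sum>l\<in>T. \<Sum>k<K. fS fs {..<n} (X (\<lambda>j. l ! j) k) - fS fs {..<n} xstar) / real K / N"
    unfolding expect_seq_def T_def N_def
    by (intro divide_right_mono) (auto simp: sum_divide_distrib intro: sum_mono)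
  also have "\<dots> \<le> N * C * sqrt (real K) / real K / N"
    using sum_batch_seqs_iterates_gap_le[OF assms] assms unfolding T_def N_def C_def
    by (intro divide_right_mono) auto
  also have "\<dots> = C / sqrt (real K)"
    using card_batch_seqs_pos[of K] assms unfolding N_def
    by (simp add: field_simps real_sqrt_mult_self flip: real_sqrt_mult)
  finally show ?thesis unfolding C_def .
qed

end

lemma minibatch_polyak_sgdI:
  fixes fs :: "nat \<Rightarrow> 'a::euclidean_space \<Rightarrow> real"
  assumes B: "1 \<le> B" "B \<le> n"
    and mu_pos: "\<And>i. i < n \<Longrightarrow> 0 < \<mu> i"
    and sc: "\<And>i. i < n \<Longrightarrow> strongly_convex (fs i) (\<mu> i)"
    and sm: "\<And>i. i < n \<Longrightarrow> L_smooth (fs i) (L i)"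
    and "\<And>S. S \<in> batches n B \<Longrightarrow> ls S \<le> (INF x. fS fs S x)"
    and "\<And>x. fS fs {..<n} xstar \<le> fS fs {..<n} x"
    and "0 < \<gamma>b"
  shows "minibatch_polyak_sgd fs (Min (\<mu> ` {..<n})) (Max (L ` {..<n})) n B ls \<gamma>b xstar"
proof
  have n: "0 < n" using B by simp
  then have mu_min: "Min (\<mu> ` {..<n}) \<le> \<mu> i" and L_max: "L i \<le> Max (L ` {..<n})" if "i < n" for i
    using that by auto
  show "strongly_convex (fS fs S) (Min (\<mu> ` {..<n}))" if "S \<subseteq> {..<n}" "S \<noteq> {}" for S
    using that finite_subset[OF that(1)] sc mu_min by (blast intro: strongly_convex_fS strongly_convex_mono)
  show "L_smooth (fS fs S) (Max (L ` {..<n}))" if "S \<subseteq> {..<n}" "S \<noteq> {}" for S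
    using that finite_subset[OF that(1)] sm L_max by (blast intro: L_smooth_fS L_smooth_mono)
  have "Min (\<mu> ` {..<n}) \<in> \<mu> ` {..<n}" using n by (intro Min_in) auto
  then show "0 < Min (\<mu> ` {..<n})" using mu_pos by auto
  have "\<mu> 0 \<le> L 0" using sc sm n by (blast intro: strongly_convex_le_L_smooth)
  then show "Min (\<mu> ` {..<n}) \<le> Max (L ` {..<n})"
    using mu_min[OF n] L_max[OF n] by linarith
qed (use assms in auto)

theorem theorem4:
  fixes fs :: "nat \<Rightarrow> real ^ 'd \<Rightarrow> real"
    and \<mu> L :: "nat \<Rightarrow> real"
    and n B K :: nat
    and ls :: "nat set \<Rightarrow> real"
    and \<gamma>b :: real
    and x0 xstar :: "real ^ 'd"
  assumes n_pos: "n \<ge> 1"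
    and B_range: "1 \<le> B" "B \<le> n"
    and mu_pos: "\<forall>i<n. \<mu> i > 0"
    and sc: "\<forall>i<n. strongly_convex (fs i) (\<mu> i)"
    and sm: "\<forall>i<n. L_smooth (fs i) (L i)"
    and ls_le: "\<forall>S\<in>batches n B. ls S \<le> (INF x. fS fs S x)"
    and xstar_min: "\<forall>x. (\<Sum>i<n. fs i x) / real n \<ge> (\<Sum>i<n. fs i xstar) / real n"
    and gb_pos: "\<gamma>b > 0"
    and K_pos: "K \<ge> 1"
  shows
    "let f = (\<lambda>x. (\<Sum>i<n. fs i x) / real n);
         Lmax = Max (L ` {..<n});
         \<mu>min = Min (\<mu> ` {..<n});
         Lt = max Lmax (1 / (2 * \<gamma>b));
         \<sigma>B = (\<Sum>S\<in>batches n B. fS fs S xstar - ls S) / real (card (batches n B));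
         \<sigma>Bmax = Max ((\<lambda>S. fS fs S xstar - ls S) ` batches n B);
         Dmax = max ((norm (x0 - xstar))\<^sup>2)
                    (2 * \<gamma>b * \<sigma>Bmax / min (\<mu>min / (2 * Lmax)) (\<mu>min * \<gamma>b));
         xbar = (\<lambda>l. (1 / real K) *\<^sub>R (\<Sum>k<K. sgd_x fs ls \<gamma>b x0 (\<lambda>j. l ! j) k))
     in expect_seq n B K (\<lambda>l. f (xbar l) - f xstar)
          \<le> (2 * Lt * Dmax + 2 * \<sigma>B) / sqrt (real K)"
proof -
  interpret minibatch_polyak_sgd fs "Min (\<mu> ` {..<n})" "Max (L ` {..<n})" n B ls \<gamma>b x0 xstar
    using assms by (intro minibatch_polyak_sgdI) (auto simp: fS_lessThan)
  show ?thesis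
    using expected_gap_le[OF K_pos]
    unfolding Let_def L_tilde_def D_max_def \<sigma>_max_def \<sigma>_avg_def \<sigma>_def fS_lessThan .
qed

end
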